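(* Let $\Pi$ be a Hermitian kernel on $\mathbb R\times\mathbb R$, smooth in both variables, inducing a locally trace-class orthogonal projection on $L_2(\mathbb R)$, with determinantal point process $\mathbb P_\Pi$, and suppose there is $C_0>0$ such that for all $k$ $$\sup_{x,y\in\mathbb R,\ |x-y|\leq1}\left|\frac{\partial^k}{\partial y^k}\Pi(x,y)\right|\leq C_0^k\,k!.$$ Then for any interval $I$ of length $|I|<(1+2C_0)^{-1}$ and any natural $k$, $$\mathbb P_\Pi(\#_I\geq k)\leq\big((1+2C_0)|I|\big)^{k(k+1)/2}.$$
   Context: $\#_I(X)$ is the number of points of a configuration $X$ (locally finite subset of $\mathbb R$) lying in $I$. $\mathbb P_\Pi$ is the determinantal point process with kernel $\Pi$ with respect to Lebesgue measure: its $l$-point correlation functions are $\det(\Pi(x_i,x_j))_{i,j=1}^l$. *)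

theory Defs
  imports "HOL-Analysis.Analysis" "HOL-Probability.Probability"
begin

coinductive smooth_map :: "('a::real_normed_vector \<Rightarrow> 'b::real_normed_vector) \<Rightarrow> bool" where
  "(\<forall>x. f differentiable (at x)) \<Longrightarrow>
   (\<forall>v. smooth_map (\<lambda>x. frechet_derivative f (at x) v)) \<Longrightarrow> smooth_map f"

fun ydiff :: "nat \<Rightarrow> (real \<Rightarrow> real \<Rightarrow> complex) \<Rightarrow> real \<Rightarrow> real \<Rightarrow> complex" where
  "ydiff 0 K x y = K x y"
| "ydiff (Suc k) K x y = vector_derivative (\<lambda>t. ydiff k K x t) (at y)"

definition count_in :: "real set \<Rightarrow> real set \<Rightarrow> nat" where
  "count_in I X = card (X \<inter> I)"

definition kdet :: "(real \<Rightarrow> real \<Rightarrow> complex) \<Rightarrow> nat \<Rightarrow> (nat \<Rightarrow> real) \<Rightarrow> complex" where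
  "kdet K l x = (\<Sum>p | p permutes {..<l}. of_int (sign p) * (\<Prod>i<l. K (x i) (x (p i))))"

text \<open>Hermitian kernel inducing an orthogonal projection on L2(R) (rows in L2,
  Hermitian symmetry, and the reproducing identity K o K = K).\<close>
definition projection_kernel :: "(real \<Rightarrow> real \<Rightarrow> complex) \<Rightarrow> bool" where
  "projection_kernel K \<longleftrightarrow>
     (\<forall>x y. K y x = cnj (K x y)) \<and>
     (\<forall>x. (\<lambda>z. K x z) \<in> borel_measurable lborel \<and> integrable lborel (\<lambda>z. (cmod (K x z))\<^sup>2)) \<and>
     (\<forall>x y. (LINT z|lborel. K x z * K z y) = K x y)"

text \<open>A random configuration X on the probability space M (locally finite subsets of R,
  with measurable counting functions) whose l-point correlation functions are
  det(K(x_i,x_j)) w.r.t. Lebesgue measure.\<close>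
definition determinantal :: "'w measure \<Rightarrow> ('w \<Rightarrow> real set) \<Rightarrow> (real \<Rightarrow> real \<Rightarrow> complex) \<Rightarrow> bool" where
  "determinantal M X K \<longleftrightarrow>
     prob_space M \<and>
     (\<forall>\<omega>\<in>space M. \<forall>B. bounded B \<longrightarrow> finite (X \<omega> \<inter> B)) \<and>
     (\<forall>B\<in>sets borel. bounded B \<longrightarrow> (\<lambda>\<omega>. count_in B (X \<omega>)) \<in> measurable M (count_space UNIV)) \<and>
     (\<forall>l\<ge>1. \<forall>f \<in> borel_measurable (PiM {..<l} (\<lambda>_. lborel)).
        (\<integral>\<^sup>+\<omega>. (\<integral>\<^sup>+t. f t \<partial>count_space {t \<in> {..<l} \<rightarrow>\<^sub>E X \<omega>. inj_on t {..<l}}) \<partial>M)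
        = (\<integral>\<^sup>+x. f x * ennreal (Re (kdet K l x)) \<partial>PiM {..<l} (\<lambda>_. lborel)))"

end

theory Submission
  imports Defs
begin

text \<open>
  By the correlation identity, \<open>P(#\<^sub>I \<ge> k)\<close> is at most the integral of \<open>det (\<Pi>(x\<^sub>i, x\<^sub>j))\<close>
  over \<open>I\<^sup>k\<close>, so it suffices to bound that determinant on \<open>I\<^sup>k\<close>. Viewed as a function of the
  point \<open>y\<^sub>m\<close> of its \<open>m\<close>-th column, the determinant vanishes at \<open>y\<^sub>0, ..., y\<^sub>m\<^sub>-\<^sub>1\<close> (equal
  columns), so the Rolle-type interpolation error bound controls its value at \<open>y\<^sub>m\<close> by
  \<open>|I|\<^sup>m / m!\<close> times the supremum of its \<open>m\<close>-th derivative, which is the same determinant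
  with \<open>\<partial>\<^sup>m\<^sub>y \<Pi>\<close> in column \<open>m\<close>. Going through the columns one by one and finally bounding
  the entries by \<open>C\<^sub>0\<^sup>j j!\<close> gives \<open>|det| \<le> k! \<Prod>\<^sub>j (C\<^sub>0 |I|)\<^sup>j\<close>, and \<open>(j + 1) \<le> 2\<^sup>j\<close>
  turns \<open>k! \<Prod>\<^sub>j (C\<^sub>0 |I|)\<^sup>j |I|\<^sup>k\<close> into the stated bound.
\<close>

definition leibniz_det :: "(nat \<Rightarrow> nat \<Rightarrow> complex) \<Rightarrow> nat \<Rightarrow> complex" where
  "leibniz_det A k = (\<Sum>p | p permutes {..<k}. of_int (sign p) * (\<Prod>i<k. A i (p i)))"

lemma kdet_eq_leibniz_det: "kdet K k x = leibniz_det (\<lambda>i j. K (x i) (x j)) k"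
  by (simp add: kdet_def leibniz_det_def)

lemma leibniz_det_cong:
  assumes "\<And>i j. i < k \<Longrightarrow> j < k \<Longrightarrow> A i j = B i j"
  shows "leibniz_det A k = leibniz_det B k"
  unfolding leibniz_det_def
proof (rule sum.cong[OF refl])
  fix p assume "p \<in> {p. p permutes {..<k}}"
  then show "of_int (sign p) * (\<Prod>i<k. A i (p i)) = of_int (sign p) * (\<Prod>i<k. B i (p i))"
    using assms permutes_in_image[of p] by (intro arg_cong2[where f="(*)"] prod.cong) auto
qed

lemma leibniz_det_identical_columns:
  assumes "j1 < k" "j2 < k" "j1 \<noteq> j2"
    and "\<And>i. i < k \<Longrightarrow> A i j1 = A i j2"
  shows "leibniz_det A k = 0"
proof -
  let ?t = "Transposition.transpose j1 j2"
  let ?f = "\<lambda>p. of_int (sign p) * (\<Prod>i<k. A i (p i)) :: complex"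
  have t: "?t permutes {..<k}" using assms by (intro permutes_swap_id) auto
  have "leibniz_det A k = (\<Sum>p | p permutes {..<k}. ?f (?t \<circ> p))"
    unfolding leibniz_det_def by (rule setum_permutations_compose_left[OF t])
  also have "\<dots> = (\<Sum>p | p permutes {..<k}. - ?f p)"
  proof (rule sum.cong[OF refl])
    fix p assume "p \<in> {p. p permutes {..<k}}"
    then have "permutation p" "permutation ?t" using t by (auto simp: permutation_permutes)
    then have "sign (?t \<circ> p) = - sign p"
      using assms(3) by (simp add: sign_compose sign_swap_id)
    moreover have "(\<Prod>i<k. A i ((?t \<circ> p) i)) = (\<Prod>i<k. A i (p i))"
      using assms(4) by (intro prod.cong) (auto simp: Transposition.transpose_def)
    ultimately show "?f (?t \<circ> p) = - ?f p" by simp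
  qed
  also have "\<dots> = - leibniz_det A k" by (simp add: leibniz_det_def sum_negf)
  finally show ?thesis by simp
qed

lemma norm_leibniz_det_le:
  assumes "\<And>i j. i < k \<Longrightarrow> j < k \<Longrightarrow> cmod (A i j) \<le> b j"
  shows "cmod (leibniz_det A k) \<le> fact k * (\<Prod>j<k. b j)"
proof -
  have "cmod (leibniz_det A k) \<le> (\<Sum>p | p permutes {..<k}. cmod (of_int (sign p) * (\<Prod>i<k. A i (p i))))"
    unfolding leibniz_det_def by (rule norm_sum)
  also have "\<dots> = (\<Sum>p | p permutes {..<k}. (\<Prod>i<k. cmod (A i (p i))))"
    by (intro sum.cong refl) (auto simp: norm_mult prod_norm sign_def)
  also have "\<dots> \<le> (\<Sum>p | p permutes {..<k}. (\<Prod>j<k. b j))"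
  proof (rule sum_mono)
    fix p assume "p \<in> {p. p permutes {..<k}}"
    then have p: "p permutes {..<k}" by simp
    have "(\<Prod>i<k. cmod (A i (p i))) \<le> (\<Prod>i<k. b (p i))"
      using assms permutes_in_image[OF p] by (intro prod_mono) auto
    also have "\<dots> = (\<Prod>j<k. b j)"
      using prod.permute[OF p, of b] by (simp add: comp_def)
    finally show "(\<Prod>i<k. cmod (A i (p i))) \<le> (\<Prod>j<k. b j)" .
  qed
  also have "\<dots> = fact k * (\<Prod>j<k. b j)"
    using card_permutations[of "{..<k}" k] by simp
  finally show ?thesis .
qed

lemma leibniz_det_column_expansion:
  assumes "j < k"
  shows "leibniz_det (\<lambda>i l. if l = j then v i else A i l) k =
    (\<Sum>p | p permutes {..<k}. of_int (sign p) * (\<Prod>i\<in>{..<k} - {inv p j}. A i (p i)) * v (inv p j))"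
  unfolding leibniz_det_def
proof (rule sum.cong[OF refl])
  fix p assume "p \<in> {p. p permutes {..<k}}"
  then have p: "p permutes {..<k}" by simp
  let ?i = "inv p j"
  have i: "?i \<in> {..<k}" using permutes_in_image[OF permutes_inv[OF p]] assms by simp
  have "(\<Prod>i<k. if p i = j then v i else A i (p i))
      = v ?i * (\<Prod>i\<in>{..<k} - {?i}. if p i = j then v i else A i (p i))"
    using prod.remove[OF _ i, of "\<lambda>i. if p i = j then v i else A i (p i)"] permutes_inverses(1)[OF p]
    by simp
  also have "(\<Prod>i\<in>{..<k} - {?i}. if p i = j then v i else A i (p i)) = (\<Prod>i\<in>{..<k} - {?i}. A i (p i))"
    using permutes_inverses(2)[OF p] by (intro prod.cong) auto
  finally show "of_int (sign p) * (\<Prod>i<k. if p i = j then v i else A i (p i)) =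
      of_int (sign p) * (\<Prod>i\<in>{..<k} - {?i}. A i (p i)) * v ?i"
    by simp
qed

lemma has_vector_derivative_leibniz_det_column:
  assumes "j < k" and "\<And>i. (v i has_vector_derivative v' i) (at t)"
  shows "((\<lambda>t. leibniz_det (\<lambda>i l. if l = j then v i t else A i l) k) has_vector_derivative
          leibniz_det (\<lambda>i l. if l = j then v' i else A i l) k) (at t)"
  unfolding leibniz_det_column_expansion[OF assms(1)]
  by (intro has_vector_derivative_sum has_vector_derivative_mult_right assms(2))

lemma Rolle_zeros_of_derivative:
  fixes f f' :: "real \<Rightarrow> real"
  assumes f': "\<And>t. (f has_real_derivative f' t) (at t)"
    and J: "is_interval J" and S: "finite S" "card S = Suc n" "S \<subseteq> J"
    and zero: "\<And>s. s \<in> S \<Longrightarrow> f s = 0"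
  obtains S' where "finite S'" "card S' = n" "S' \<subseteq> J" "\<And>s. s \<in> S' \<Longrightarrow> f' s = 0"
proof -
  define s where "s = sorted_list_of_set S"
  have len: "length s = Suc n" and set_s: "set s = S" using S by (simp_all add: s_def)
  have less: "s ! i < s ! i'" if "i < i'" "i' < Suc n" for i i'
    using that len sorted_wrt_iff_nth_less[of "(<)" s] by (simp add: s_def)
  have s_J: "s ! i \<in> J" if "i < Suc n" for i
    using that len set_s S(3) nth_mem by (metis subsetD)
  have s_zero: "f (s ! i) = 0" if "i < Suc n" for i
    using that len set_s zero nth_mem by metis
  have "\<exists>r. s ! i < r \<and> r < s ! Suc i \<and> f' r = 0" if i: "i < n" for i
  proof -
    have "continuous_on {s ! i..s ! Suc i} f"
      using f' by (meson DERIV_isCont continuous_at_imp_continuous_on)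
    moreover have "\<And>x. (f has_derivative (*) (f' x)) (at x)"
      using f' by (simp add: has_field_derivative_def)
    ultimately obtain z where "s ! i < z" "z < s ! Suc i" "(*) (f' z) = (\<lambda>v. 0)"
      using Rolle_deriv[of "s ! i" "s ! Suc i" f "\<lambda>x. (*) (f' x)"] less[of i "Suc i"] s_zero i by auto
    then show ?thesis by (metis mult_1_right)
  qed
  then obtain r where r: "\<And>i. i < n \<Longrightarrow> s ! i < r i \<and> r i < s ! Suc i \<and> f' (r i) = 0"
    by metis
  have "r i < r i'" if "i < i'" "i' < n" for i i'
  proof -
    have "r i < s ! Suc i" using r that by auto
    also have "s ! Suc i \<le> s ! i'" using less[of "Suc i" i'] that by (cases "Suc i = i'") auto
    also have "\<dots> < r i'" using r that by auto
    finally show ?thesis .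
  qed
  then have "inj_on r {..<n}"
    by (metis inj_onI lessThan_iff linorder_neqE_nat order_less_irrefl)
  moreover have "r i \<in> J" if "i < n" for i
    using mem_is_interval_1_I[OF J s_J[of i] s_J[of "Suc i"]] r[OF that] that by auto
  ultimately show ?thesis
    using r by (intro that[of "r ` {..<n}"]) (auto simp: card_image)
qed

lemma higher_Rolle:
  fixes f :: "nat \<Rightarrow> real \<Rightarrow> real"
  assumes "\<And>j t. (f j has_real_derivative f (Suc j) t) (at t)"
    and "is_interval J" and "finite S" "card S = Suc n" "S \<subseteq> J"
    and "\<And>s. s \<in> S \<Longrightarrow> f 0 s = 0"
  shows "\<exists>\<xi>\<in>J. f n \<xi> = 0"
  using assms
proof (induction n arbitrary: f S)
  case 0
  then obtain s where "S = {s}" by (auto simp: card_Suc_eq)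
  then show ?case using 0 by auto
next
  case (Suc n)
  obtain S' where "finite S'" "card S' = Suc n" "S' \<subseteq> J" "\<And>s. s \<in> S' \<Longrightarrow> f 1 s = 0"
    using Rolle_zeros_of_derivative[of "f 0" "f 1" J S "Suc n"] Suc.prems by auto
  then show ?case
    using Suc.IH[of "\<lambda>j. f (Suc j)" S'] Suc.prems(1,2) by auto
qed

lemma higher_pderiv_degree:
  fixes p :: "'a::{comm_semiring_1,semiring_no_zero_divisors,semiring_char_0} poly"
  assumes "degree p = n"
  shows "(pderiv ^^ n) p = [:fact n * lead_coeff p:]"
proof -
  have "degree ((pderiv ^^ n) p) = 0" using assms by (simp add: degree_higher_pderiv)
  then have "(pderiv ^^ n) p = [:coeff ((pderiv ^^ n) p) 0:]" by (metis degree_0_id)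
  also have "coeff ((pderiv ^^ n) p) 0 = fact n * lead_coeff p"
    using assms by (simp add: coeff_higher_pderiv pochhammer_fact)
  finally show ?thesis .
qed

lemma interpolation_error_bound:
  fixes f :: "nat \<Rightarrow> real \<Rightarrow> real"
  assumes d: "\<And>j t. (f j has_real_derivative f (Suc j) t) (at t)"
    and J: "is_interval J" and Z: "finite Z" "card Z = n" "Z \<subseteq> J"
    and zero: "\<And>z. z \<in> Z \<Longrightarrow> f 0 z = 0"
    and B: "\<And>t. t \<in> J \<Longrightarrow> \<bar>f n t\<bar> \<le> B"
    and y: "y \<in> J"
  shows "\<bar>f 0 y\<bar> * fact n \<le> B * (\<Prod>z\<in>Z. \<bar>y - z\<bar>)"
proof (cases "y \<in> Z")
  case True
  then show ?thesis using zero B[OF y] by (simp add: prod_nonneg)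
next
  case False
  define w where "w = (\<Prod>z\<in>Z. [:-z, 1:])"
  have poly_w: "poly w t = (\<Prod>z\<in>Z. t - z)" for t by (simp add: w_def poly_prod)
  have w_y: "poly w y \<noteq> 0" using False Z unfolding poly_w by auto
  have "degree w = n"
    using Z unfolding w_def by (subst degree_prod_eq_sum_degree) auto
  moreover have "lead_coeff w = 1" by (simp add: w_def lead_coeff_prod)
  ultimately have w_n: "(pderiv ^^ n) w = [:fact n:]" by (simp add: higher_pderiv_degree)
  \<comment> \<open>\<open>c\<close> makes \<open>g = f - c w\<close> vanish at \<open>y\<close> as well as on \<open>Z\<close>;
    the \<open>n\<close>-th derivative of \<open>c w\<close> is the constant \<open>c n!\<close>.\<close>
  define c where "c = f 0 y / poly w y"
  define g where "g j t = f j t - c * poly ((pderiv ^^ j) w) t" for j t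
  have "\<exists>\<xi>\<in>J. g n \<xi> = 0"
  proof (rule higher_Rolle[where S="insert y Z"])
    show "(g j has_real_derivative g (Suc j) t) (at t)" for j t
      unfolding g_def by (auto intro!: derivative_eq_intros d)
    show "finite (insert y Z)" "card (insert y Z) = Suc n" "insert y Z \<subseteq> J"
      using Z False y by auto
    show "g 0 s = 0" if "s \<in> insert y Z" for s
      using that w_y zero Z by (auto simp: g_def c_def poly_w)
  qed (rule J)
  then obtain \<xi> where \<xi>: "\<xi> \<in> J" "f n \<xi> = c * fact n"
    by (auto simp: g_def w_n)
  then have "\<bar>f 0 y\<bar> * fact n = \<bar>f n \<xi>\<bar> * \<bar>poly w y\<bar>"
    using w_y by (simp add: c_def abs_mult)
  also have "\<dots> \<le> B * \<bar>poly w y\<bar>" using B[OF \<xi>(1)] by (simp add: mult_right_mono)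
  finally show ?thesis by (simp add: poly_w abs_prod)
qed

lemma interpolation_error_bound_complex:
  fixes f :: "nat \<Rightarrow> real \<Rightarrow> complex"
  assumes d: "\<And>j t. (f j has_vector_derivative f (Suc j) t) (at t)"
    and J: "is_interval J" and Z: "finite Z" "card Z = n" "Z \<subseteq> J"
    and zero: "\<And>z. z \<in> Z \<Longrightarrow> f 0 z = 0"
    and B: "\<And>t. t \<in> J \<Longrightarrow> cmod (f n t) \<le> B"
    and y: "y \<in> J"
  shows "cmod (f 0 y) * fact n \<le> B * (\<Prod>z\<in>Z. \<bar>y - z\<bar>)"
proof -
  \<comment> \<open>Rotate by a unit \<open>u\<close> making \<open>u f\<^sub>0(y)\<close> real and nonnegative, then take real parts.\<close>
  define u where "u = (if f 0 y = 0 then 1 else cnj (f 0 y) / cmod (f 0 y))"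
  have u: "cmod u \<le> 1" by (simp add: u_def norm_divide)
  have "Re (u * f 0 y) = cmod (f 0 y)"
  proof (cases "f 0 y = 0")
    case False
    then have "u * f 0 y = complex_of_real (cmod (f 0 y))"
      by (simp add: u_def field_simps complex_norm_square[symmetric] power2_eq_square)
    then show ?thesis by simp
  qed (simp add: u_def)
  moreover have "\<bar>Re (u * f 0 y)\<bar> * fact n \<le> B * (\<Prod>z\<in>Z. \<bar>y - z\<bar>)"
  proof (rule interpolation_error_bound[OF _ J Z _ _ y])
    show "((\<lambda>t. Re (u * f j t)) has_real_derivative Re (u * f (Suc j) t)) (at t)" for j t
      by (intro has_field_derivative_Re has_vector_derivative_mult_right d)
    show "\<bar>Re (u * f n t)\<bar> \<le> B" if "t \<in> J" for t
      using abs_Re_le_cmod[of "u * f n t"] B[OF that] u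
      by (simp add: norm_mult) (meson mult_left_le_one_le norm_ge_zero order_trans)
  qed (simp add: zero)
  ultimately show ?thesis by simp
qed

lemma smooth_map_differentiable: "smooth_map f \<Longrightarrow> f differentiable (at x)"
  by (erule smooth_map.cases) auto

lemma smooth_map_frechet_derivative:
  "smooth_map f \<Longrightarrow> smooth_map (\<lambda>x. frechet_derivative f (at x) v)"
  by (erule smooth_map.cases) auto

lemma has_vector_derivative_second_argument:
  fixes g :: "real \<times> real \<Rightarrow> 'a::real_normed_vector"
  assumes "g differentiable (at (x, t))"
  shows "((\<lambda>s. g (x, s)) has_vector_derivative frechet_derivative g (at (x, t)) (0, 1)) (at t)"
proof -
  let ?g' = "frechet_derivative g (at (x, t))"
  have g': "(g has_derivative ?g') (at (x, t))"
    using assms frechet_derivative_works by blast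
  have "((\<lambda>s. (x, s)) has_derivative (\<lambda>h. (0, h))) (at t)"
    by (intro has_derivative_Pair has_derivative_const has_derivative_ident)
  from has_derivative_compose[OF this g']
  have "((\<lambda>s. g (x, s)) has_derivative (\<lambda>h. ?g' (0, h))) (at t)" .
  moreover have "h *\<^sub>R ?g' (0, 1) = ?g' (0, h)" for h
    using linear_scale[OF has_derivative_linear[OF g'], of h "(0, 1)"] by simp
  ultimately show ?thesis by (simp only: has_vector_derivative_def)
qed

lemma ydiff_has_vector_derivative:
  assumes "smooth_map (\<lambda>p::real \<times> real. K (fst p) (snd p))"
  shows "((\<lambda>t. ydiff n K x t) has_vector_derivative ydiff (Suc n) K x t) (at t)"
proof -
  define D where "D n = ((\<lambda>g p. frechet_derivative g (at p) (0, 1)) ^^ n) (\<lambda>p. K (fst p) (snd p))"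
    for n
  have D_0: "D 0 = (\<lambda>p. K (fst p) (snd p))"
    and D_Suc: "D (Suc n) = (\<lambda>p. frechet_derivative (D n) (at p) (0, 1))" for n
    by (simp_all add: D_def)
  have "smooth_map (D n)" for n
    by (induction n) (simp_all only: D_0 D_Suc assms smooth_map_frechet_derivative)
  then have D_deriv: "((\<lambda>s. D n (x, s)) has_vector_derivative D (Suc n) (x, t)) (at t)" for n t
    unfolding D_Suc by (intro has_vector_derivative_second_argument smooth_map_differentiable)
  have "ydiff n K x = (\<lambda>t. D n (x, t))" for n
  proof (induction n)
    case (Suc n)
    then show ?case by (intro ext) (simp add: vector_derivative_at[OF D_deriv])
  qed (simp add: D_0)
  then show ?thesis using D_deriv by simp
qed

definition mixed_matrix ::
    "(real \<Rightarrow> real \<Rightarrow> complex) \<Rightarrow> (nat \<Rightarrow> real) \<Rightarrow> nat \<Rightarrow> (nat \<Rightarrow> real) \<Rightarrow> (nat \<Rightarrow> real) \<Rightarrow>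
      nat \<Rightarrow> nat \<Rightarrow> complex" where
  "mixed_matrix K x m y \<xi> i j = (if j < m then K (x i) (y j) else ydiff j K (x i) (\<xi> j))"

lemma norm_det_mixed_matrix_Suc_le:
  fixes K :: "real \<Rightarrow> real \<Rightarrow> complex"
  assumes smooth: "smooth_map (\<lambda>p::real \<times> real. K (fst p) (snd p))"
    and J: "is_interval J" and L: "\<And>a b. a \<in> J \<Longrightarrow> b \<in> J \<Longrightarrow> \<bar>a - b\<bar> \<le> L"
    and y: "\<And>j. j < k \<Longrightarrow> y j \<in> J" "inj_on y {..<m}"
    and m: "m < k" and \<xi>: "\<xi> m \<in> J"
    and bound: "\<And>t. t \<in> J \<Longrightarrow> cmod (leibniz_det (mixed_matrix K x m y (\<xi>(m := t))) k) \<le> B"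
  shows "cmod (leibniz_det (mixed_matrix K x (Suc m) y \<xi>) k) * fact m \<le> B * L ^ m"
proof -
  let ?A = "mixed_matrix K x (Suc m) y \<xi>"
  \<comment> \<open>\<open>G 0\<close> is \<open>det ?A\<close> with the point \<open>y m\<close> of column \<open>m\<close> made variable; its \<open>m\<close>-th
    derivative is the determinant bounded by \<open>B\<close>.\<close>
  define G where "G n t = leibniz_det (\<lambda>i l. if l = m then ydiff n K (x i) t else ?A i l) k" for n t
  have G_m: "G m t = leibniz_det (mixed_matrix K x m y (\<xi>(m := t))) k" for t
    unfolding G_def by (rule leibniz_det_cong) (auto simp: mixed_matrix_def)
  have "0 \<le> B" using bound[OF \<xi>] norm_ge_zero order_trans by blast
  have "cmod (G 0 (y m)) * fact m \<le> B * (\<Prod>z\<in>y ` {..<m}. \<bar>y m - z\<bar>)"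
  proof (rule interpolation_error_bound_complex[OF _ J])
    show "(G n has_vector_derivative G (Suc n) t) (at t)" for n t
      unfolding G_def using m ydiff_has_vector_derivative[OF smooth]
      by (rule has_vector_derivative_leibniz_det_column)
    show "G 0 z = 0" if z: "z \<in> y ` {..<m}" for z
    proof -
      obtain j where "j < m" "z = y j" using z by auto
      then show ?thesis
        unfolding G_def using m
        by (intro leibniz_det_identical_columns[of j k m]) (auto simp: mixed_matrix_def)
    qed
  qed (use y m bound in \<open>auto simp: G_m card_image\<close>)
  also have "(\<Prod>z\<in>y ` {..<m}. \<bar>y m - z\<bar>) \<le> (\<Prod>z\<in>y ` {..<m}. L)"
    using y m L by (intro prod_mono) auto
  also have "\<dots> = L ^ m" using y(2) by (simp add: card_image)
  also have "G 0 (y m) = leibniz_det ?A k"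
    unfolding G_def by (rule leibniz_det_cong) (auto simp: mixed_matrix_def)
  finally show ?thesis using \<open>0 \<le> B\<close> by (simp add: mult_left_mono)
qed

lemma norm_det_mixed_matrix_le:
  fixes K :: "real \<Rightarrow> real \<Rightarrow> complex" and D :: "nat \<Rightarrow> real"
  assumes smooth: "smooth_map (\<lambda>p::real \<times> real. K (fst p) (snd p))"
    and J: "is_interval J" and L: "0 \<le> L" "\<And>a b. a \<in> J \<Longrightarrow> b \<in> J \<Longrightarrow> \<bar>a - b\<bar> \<le> L"
    and D: "\<And>j a b. a \<in> J \<Longrightarrow> b \<in> J \<Longrightarrow> cmod (ydiff j K a b) \<le> D j" "\<And>j. 0 \<le> D j"
    and x: "\<And>i. i < k \<Longrightarrow> x i \<in> J" and y: "\<And>j. j < k \<Longrightarrow> y j \<in> J"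
    and "m \<le> k" and "\<And>j. j < k \<Longrightarrow> \<xi> j \<in> J"
  shows "cmod (leibniz_det (mixed_matrix K x m y \<xi>) k)
           \<le> fact k * (\<Prod>j<m. D j * L ^ j / fact j) * (\<Prod>j\<in>{m..<k}. D j)"
  using \<open>m \<le> k\<close> \<open>\<And>j. j < k \<Longrightarrow> \<xi> j \<in> J\<close>
proof (induction m arbitrary: \<xi>)
  case 0
  have "cmod (leibniz_det (mixed_matrix K x 0 y \<xi>) k) \<le> fact k * (\<Prod>j<k. D j)"
    using D(1) x 0 by (intro norm_leibniz_det_le) (simp add: mixed_matrix_def)
  then show ?case by (simp add: atLeast0LessThan)
next
  case (Suc m)
  let ?bound = "\<lambda>m. fact k * (\<Prod>j<m. D j * L ^ j / fact j) * (\<Prod>j\<in>{m..<k}. D j)"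
  have m: "m < k" using Suc.prems by simp
  show ?case
  proof (cases "inj_on y {..<m}")
    case False
    then obtain j1 j2 where "j1 < m" "j2 < m" "j1 \<noteq> j2" "y j1 = y j2"
      by (auto simp: inj_on_def)
    then have "leibniz_det (mixed_matrix K x (Suc m) y \<xi>) k = 0"
      using m by (intro leibniz_det_identical_columns[of j1 k j2]) (auto simp: mixed_matrix_def)
    moreover have "0 \<le> ?bound (Suc m)" using D(2) L by (intro mult_nonneg_nonneg prod_nonneg) auto
    ultimately show ?thesis by simp
  next
    case True
    have "cmod (leibniz_det (mixed_matrix K x (Suc m) y \<xi>) k) * fact m \<le> ?bound m * L ^ m"
      using Suc.IH Suc.prems m
      by (intro norm_det_mixed_matrix_Suc_le[OF smooth J L(2) y True]) (auto simp: fun_upd_def)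
    also have "?bound m * L ^ m = ?bound (Suc m) * fact m"
      using prod.atLeast_Suc_lessThan[OF m, of D] by (simp add: field_simps)
    finally show ?thesis by (rule mult_right_le_imp_le) simp
  qed
qed

lemma norm_kdet_le:
  fixes K :: "real \<Rightarrow> real \<Rightarrow> complex" and D :: "nat \<Rightarrow> real"
  assumes "smooth_map (\<lambda>p::real \<times> real. K (fst p) (snd p))"
    and "is_interval J" and "0 \<le> L" "\<And>a b. a \<in> J \<Longrightarrow> b \<in> J \<Longrightarrow> \<bar>a - b\<bar> \<le> L"
    and "\<And>j a b. a \<in> J \<Longrightarrow> b \<in> J \<Longrightarrow> cmod (ydiff j K a b) \<le> D j" "\<And>j. 0 \<le> D j"
    and "\<And>i. i < k \<Longrightarrow> x i \<in> J"
  shows "cmod (kdet K k x) \<le> fact k * (\<Prod>j<k. D j * L ^ j / fact j)"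
proof -
  have "kdet K k x = leibniz_det (mixed_matrix K x k x x) k"
    unfolding kdet_eq_leibniz_det by (rule leibniz_det_cong) (simp add: mixed_matrix_def)
  then show ?thesis
    using norm_det_mixed_matrix_le[where m=k and y=x and \<xi>=x, OF assms assms(7) order_refl assms(7)]
    by simp
qed

lemma interval_dist_le_measure:
  fixes I :: "real set"
  assumes "is_interval I" "bounded I" "a \<in> I" "b \<in> I"
  shows "\<bar>a - b\<bar> \<le> measure lborel I"
proof -
  have I: "I \<in> fmeasurable lborel"
    using assms(1) emeasure_bounded_finite[OF assms(2)]
    by (simp add: fmeasurable_def real_interval_borel_measurable)
  have "v - u \<le> measure lborel I" if "u \<in> I" "v \<in> I" "u \<le> v" for u v
  proof -
    have "{u..v} \<subseteq> I"
      using mem_is_interval_1_I[OF assms(1) that(1,2)] by auto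
    then have "measure lborel {u..v} \<le> measure lborel I"
      by (rule measure_mono_fmeasurable[OF _ _ I]) simp
    then show ?thesis using that(3) by simp
  qed
  from this[of a b] this[of b a] show ?thesis
    using assms(3,4) by (cases "a \<le> b") auto
qed

lemma norm_kdet_le_interval:
  fixes K :: "real \<Rightarrow> real \<Rightarrow> complex"
  assumes "smooth_map (\<lambda>p::real \<times> real. K (fst p) (snd p))" and "0 \<le> C0"
    and "\<And>n x y. \<bar>x - y\<bar> \<le> 1 \<Longrightarrow> cmod (ydiff n K x y) \<le> C0 ^ n * fact n"
    and "is_interval I" "bounded I" "measure lborel I \<le> 1"
    and "\<And>i. i < k \<Longrightarrow> x i \<in> I"
  shows "cmod (kdet K k x) \<le> fact k * (\<Prod>j<k. (C0 * measure lborel I) ^ j)"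
proof -
  have dist: "\<bar>a - b\<bar> \<le> measure lborel I" if "a \<in> I" "b \<in> I" for a b
    using interval_dist_le_measure assms(4,5) that .
  have "cmod (kdet K k x) \<le> fact k * (\<Prod>j<k. C0 ^ j * fact j * measure lborel I ^ j / fact j)"
  proof (rule norm_kdet_le[where J=I])
    show "cmod (ydiff j K a b) \<le> C0 ^ j * fact j" if "a \<in> I" "b \<in> I" for j a b
      using assms(3,6) dist[OF that] by simp
  qed (use assms(1,2,4,7) dist in auto)
  then show ?thesis by (simp add: power_mult_distrib)
qed

lemma count_in_ge_obtains_injective_tuple:
  assumes "finite (X \<inter> I)" "k \<le> count_in I X"
  obtains t where "t \<in> {..<k} \<rightarrow>\<^sub>E X \<inter> I" "inj_on t {..<k}"
proof -
  have "k \<le> card (X \<inter> I)" using assms(2) by (simp add: count_in_def)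
  then obtain S where S: "S \<subseteq> X \<inter> I" "card S = k" by (meson obtain_subset_with_card_n)
  have "finite S" using S(1) assms(1) by (rule finite_subset)
  then obtain h where h: "bij_betw h {..<k} S"
    using ex_bij_betw_nat_finite S(2) by (metis atLeast0LessThan)
  show ?thesis
  proof (rule that[of "restrict h {..<k}"])
    show "restrict h {..<k} \<in> {..<k} \<rightarrow>\<^sub>E X \<inter> I"
      using h S(1) by (auto simp: restrict_PiE_iff bij_betw_def)
    show "inj_on (restrict h {..<k}) {..<k}"
      using h by (simp add: bij_betw_def inj_on_def)
  qed
qed

lemma one_le_nn_integral_injective_tuples:
  assumes "finite (X \<inter> I)" "k \<le> count_in I X"
  shows "1 \<le> (\<integral>\<^sup>+t. indicator ({..<k} \<rightarrow>\<^sub>E I) t \<partial>count_space {t \<in> {..<k} \<rightarrow>\<^sub>E X. inj_on t {..<k}})"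
proof -
  let ?T = "{t \<in> {..<k} \<rightarrow>\<^sub>E X. inj_on t {..<k}}"
  obtain t where t: "t \<in> {..<k} \<rightarrow>\<^sub>E X \<inter> I" "inj_on t {..<k}"
    using count_in_ge_obtains_injective_tuple[OF assms] .
  then have "t \<in> ?T" "t \<in> {..<k} \<rightarrow>\<^sub>E I" by auto
  then have "1 = (\<integral>\<^sup>+s. indicator {t} s \<partial>count_space ?T)" by simp
  also have "\<dots> \<le> (\<integral>\<^sup>+s. indicator ({..<k} \<rightarrow>\<^sub>E I) s \<partial>count_space ?T)"
    using \<open>t \<in> {..<k} \<rightarrow>\<^sub>E I\<close> by (intro nn_integral_mono) (auto split: split_indicator)
  finally show ?thesis .
qed

lemma determinantal_correlation:
  assumes "determinantal M X K" "l \<ge> 1" "f \<in> borel_measurable (PiM {..<l} (\<lambda>_. lborel))"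
  shows "(\<integral>\<^sup>+\<omega>. (\<integral>\<^sup>+t. f t \<partial>count_space {t \<in> {..<l} \<rightarrow>\<^sub>E X \<omega>. inj_on t {..<l}}) \<partial>M)
           = (\<integral>\<^sup>+x. f x * ennreal (Re (kdet K l x)) \<partial>PiM {..<l} (\<lambda>_. lborel))"
  using assms unfolding determinantal_def by blast

lemma determinantal_prob_count_ge_le:
  fixes K :: "real \<Rightarrow> real \<Rightarrow> complex"
  assumes det: "determinantal M X K" and "k \<ge> 1"
    and I: "I \<in> sets lborel" "bounded I"
    and B: "\<And>x. (\<And>i. i < k \<Longrightarrow> x i \<in> I) \<Longrightarrow> Re (kdet K k x) \<le> B" "0 \<le> B"
  shows "measure M {\<omega> \<in> space M. k \<le> count_in I (X \<omega>)} \<le> B * measure lborel I ^ k"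
proof (cases "{\<omega> \<in> space M. k \<le> count_in I (X \<omega>)} \<in> sets M")
  case False
  then show ?thesis using B(2) by (simp add: measure_notin_sets)
next
  case True
  define A where "A = {\<omega> \<in> space M. k \<le> count_in I (X \<omega>)}"
  define E where "E = {..<k} \<rightarrow>\<^sub>E I"
  let ?P = "PiM {..<k} (\<lambda>_. lborel)"
  let ?tuples = "\<lambda>\<omega>. {t \<in> {..<k} \<rightarrow>\<^sub>E X \<omega>. inj_on t {..<k}}"
  have E: "E \<in> sets ?P"
    unfolding E_def by (rule sets_PiM_I_finite) (use I in auto)
  have "(\<integral>\<^sup>+\<omega>. indicator A \<omega> \<partial>M)
      \<le> (\<integral>\<^sup>+\<omega>. (\<integral>\<^sup>+t. indicator E t \<partial>count_space (?tuples \<omega>)) \<partial>M)"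
  proof (rule nn_integral_mono)
    fix \<omega> assume "\<omega> \<in> space M"
    then have "finite (X \<omega> \<inter> I)" using det I(2) by (simp add: determinantal_def)
    show "indicator A \<omega> \<le> (\<integral>\<^sup>+t. indicator E t \<partial>count_space (?tuples \<omega>))"
    proof (cases "\<omega> \<in> A")
      case True
      then show ?thesis
        using one_le_nn_integral_injective_tuples[OF \<open>finite (X \<omega> \<inter> I)\<close>]
        by (simp add: A_def E_def)
    qed simp
  qed
  then have count_le: "emeasure M A \<le> (\<integral>\<^sup>+x. indicator E x * ennreal (Re (kdet K k x)) \<partial>?P)"
    using True determinantal_correlation[OF det \<open>k \<ge> 1\<close> borel_measurable_indicator[OF E]]
    by (simp add: A_def)
  have "(\<integral>\<^sup>+x. indicator E x * ennreal (Re (kdet K k x)) \<partial>?P) \<le> (\<integral>\<^sup>+x. ennreal B * indicator E x \<partial>?P)"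
  proof (rule nn_integral_mono)
    fix x
    show "indicator E x * ennreal (Re (kdet K k x)) \<le> ennreal B * indicator E x"
    proof (cases "x \<in> E")
      case True
      then have "Re (kdet K k x) \<le> B" by (intro B(1)) (auto simp: E_def)
      then show ?thesis using True by (simp add: ennreal_leI)
    qed simp
  qed
  also have "\<dots> = ennreal B * emeasure ?P E"
    using E by (simp add: nn_integral_cmult_indicator)
  also have "emeasure ?P E = (\<Prod>i<k. emeasure lborel I)"
    unfolding E_def using I(1)
    by (intro product_sigma_finite.emeasure_PiM)
       (auto simp: product_sigma_finite_def lborel.sigma_finite_measure_axioms)
  also have "\<dots> = ennreal (measure lborel I ^ k)"
    using emeasure_bounded_finite[OF I(2)] by (simp add: emeasure_eq_ennreal_measure ennreal_power)
  finally have "emeasure M A \<le> ennreal (B * measure lborel I ^ k)"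
    using order_trans[OF count_le] B(2) by (simp add: ennreal_mult)
  moreover have "emeasure M A \<noteq> \<top>"
    using det prob_space.emeasure_le_1[of M A] by (auto simp: determinantal_def top_unique)
  ultimately show ?thesis
    using B(2) by (simp add: A_def emeasure_eq_ennreal_measure ennreal_le_iff)
qed

lemma fact_prod_power_le_triangular_power:
  fixes C L :: real
  assumes "0 \<le> C" "0 \<le> L"
  shows "fact k * (\<Prod>j<k. (C * L) ^ j) * L ^ k \<le> ((1 + 2 * C) * L) ^ (k * (k + 1) div 2)"
proof (induction k)
  case (Suc k)
  have "real (Suc k) \<le> 2 ^ k"
    using less_exp[of k] by (metis Suc_leI of_nat_le_iff of_nat_numeral of_nat_power)
  then have "real (Suc k) * C ^ k \<le> (2 * C) ^ k"
    using assms by (simp add: power_mult_distrib mult_right_mono)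
  also have "\<dots> \<le> (1 + 2 * C) ^ Suc k"
    using assms by (intro order_trans[OF power_mono power_increasing]) auto
  finally have "real (Suc k) * C ^ k * L ^ Suc k \<le> (1 + 2 * C) ^ Suc k * L ^ Suc k"
    by (rule mult_right_mono) (use assms in simp)
  then have step: "real (Suc k) * (C * L) ^ k * L \<le> ((1 + 2 * C) * L) ^ Suc k"
    by (simp add: power_mult_distrib ac_simps)
  have "fact (Suc k) * (\<Prod>j<Suc k. (C * L) ^ j) * L ^ Suc k
      = (fact k * (\<Prod>j<k. (C * L) ^ j) * L ^ k) * (real (Suc k) * (C * L) ^ k * L)"
    by (simp add: algebra_simps)
  also have "\<dots> \<le> ((1 + 2 * C) * L) ^ (k * (k + 1) div 2) * ((1 + 2 * C) * L) ^ Suc k"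
    using Suc.IH step assms by (intro mult_mono) auto
  also have "\<dots> = ((1 + 2 * C) * L) ^ (k * (k + 1) div 2 + Suc k)"
    by (simp add: power_add)
  also have "k * (k + 1) div 2 + Suc k = Suc k * (Suc k + 1) div 2"
    by simp
  finally show ?case .
qed simp

theorem lemma4p2:
  fixes K :: "real \<Rightarrow> real \<Rightarrow> complex"
    and M :: "'w measure" and X :: "'w \<Rightarrow> real set"
    and C0 :: real and I :: "real set" and k :: nat
  assumes "smooth_map (\<lambda>p::real \<times> real. K (fst p) (snd p))"
    and "projection_kernel K"
    and "determinantal M X K"
    and "C0 > 0"
    and "\<And>n x y. \<bar>x - y\<bar> \<le> 1 \<Longrightarrow> cmod (ydiff n K x y) \<le> C0 ^ n * fact n"
    and "is_interval I" and "bounded I"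
    and "measure lborel I < 1 / (1 + 2 * C0)"
  shows "measure M {\<omega> \<in> space M. count_in I (X \<omega>) \<ge> k}
           \<le> ((1 + 2 * C0) * measure lborel I) ^ (k * (k + 1) div 2)"
proof (cases "k = 0")
  case True
  then show ?thesis
    using assms(3) prob_space.prob_le_1 by (auto simp: determinantal_def)
next
  case False
  let ?L = "measure lborel I"
  \<comment> \<open>\<open>|I| \<le> 1\<close> is all that is used of the smallness of \<open>I\<close>: it makes the derivative
    bounds applicable to any two points of \<open>I\<close>.\<close>
  have "1 / (1 + 2 * C0) \<le> 1" using assms(4) by simp
  then have "?L \<le> 1" using assms(8) by linarith
  have "measure M {\<omega> \<in> space M. k \<le> count_in I (X \<omega>)} \<le> fact k * (\<Prod>j<k. (C0 * ?L) ^ j) * ?L ^ k"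
  proof (rule determinantal_prob_count_ge_le[OF assms(3) _ _ assms(7)])
    show "Re (kdet K k x) \<le> fact k * (\<Prod>j<k. (C0 * ?L) ^ j)" if "\<And>i. i < k \<Longrightarrow> x i \<in> I" for x
      using norm_kdet_le_interval[where k=k and x=x, OF assms(1) _ assms(5-7) \<open>?L \<le> 1\<close> that] assms(4)
        complex_Re_le_cmod[of "kdet K k x"] by simp
    show "0 \<le> fact k * (\<Prod>j<k. (C0 * ?L) ^ j)"
      using assms(4) by (intro mult_nonneg_nonneg prod_nonneg) auto
  qed (use False real_interval_borel_measurable[OF assms(6)] in auto)
  also have "\<dots> \<le> ((1 + 2 * C0) * ?L) ^ (k * (k + 1) div 2)"
    using assms(4) by (intro fact_prod_power_le_triangular_power) auto
  finally show ?thesis by simp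
qed

end
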